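(* Let $n\le k$ be positive integers. For every $\sigma$-structure $\mathcal{A}$: (a) there is a (unique) homomorphism $\epsilon^{n,k}_{\mathcal{A}}:\mathbb{H}_{n,k}\mathcal{A}\to\mathcal{A}$ with $\epsilon_{\mathcal{A}}=\epsilon^{n,k}_{\mathcal{A}}\circ q_n$; (b) the map $q_n\circ\mathbb{T}_kq_n\circ\delta_{\mathcal{A}}:\mathbb{T}_k\mathcal{A}\to\mathbb{H}_{n,k}\mathbb{H}_{n,k}\mathcal{A}$ is constant on $\approx_n$-classes, so it induces a well-defined map $\delta^{n,k}_{\mathcal{A}}:\mathbb{H}_{n,k}\mathcal{A}\to\mathbb{H}_{n,k}\mathbb{H}_{n,k}\mathcal{A}$ with $\delta^{n,k}_{\mathcal{A}}\circ q_n=q_n\circ\mathbb{T}_kq_n\circ\delta_{\mathcal{A}}$. The families $\epsilon^{n,k}$ and $\delta^{n,k}$ are natural transformations $\mathbb{H}_{n,k}\Rightarrow\mathrm{Id}$ and $\mathbb{H}_{n,k}\Rightarrow\mathbb{H}_{n,k}\mathbb{H}_{n,k}$ on the category of $\sigma$-structures and homomorphisms.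
   Context: For $m\in\mathbb{N}$, $[m]=\{1,\dots,m\}$. For a $\sigma$-structure $\mathcal{A}$, $\mathbb{T}_k\mathcal{A}$ has universe the nonempty finite lists over $A\times[k]$; $\epsilon_{\mathcal{A}}(s)$ is the first component of the last pair of $s$; $(s_1,\dots,s_r)\in R^{\mathbb{T}_k\mathcal{A}}$ iff the $s_i$ are pairwise prefix-comparable, $(\epsilon_{\mathcal{A}}(s_1),\dots,\epsilon_{\mathcal{A}}(s_r))\in R^{\mathcal{A}}$, and whenever $s_i$ is a prefix of $s_j$ ending with $(a,p)$, no prefix of $s_j$ properly extending $s_i$ ends with a pair $(a',p)$. For a homomorphism $f$, $\mathbb{T}_kf$ applies $f$ to first components. $\delta_{\mathcal{A}}[(a_1,p_1),\dots,(a_m,p_m)]=[(s_1,p_1),\dots,(s_m,p_m)]$ with $s_i=[(a_1,p_1),\dots,(a_i,p_i)]$ (these are the counit and comultiplication of the pebbling comonad $\mathbb{T}_k$). A list over $A\times[k]$ is basic if it has at most $n$ pairs with distinct pebble indices; $S_n(s)=[s]$ if $s$ is basic, else $S_n(s)=[a];S_n(t)$ with $s=a\cdot t$ and $a$ the longest basic prefix. For $p\in[k]$ and $S_n(s)=t;[s']$ ($s'$ the last block), $\alpha_n(s,p)=t;[s']$ if $|s'|=n$ or $p$ occurs in $s'$, else $t$. $[s;(a,i)]\approx_n[t;(b,j)]$ iff $a=b$ and $\alpha_n(s,i)=\alpha_n(t,j)$. $\mathbb{H}_{n,k}\mathcal{A}=\mathbb{T}_k\mathcal{A}/{\approx_n}$,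 where a tuple of classes is related iff some choice of representatives is related in $\mathbb{T}_k\mathcal{A}$; $q_n$ denotes the quotient map $\mathbb{T}_k\mathcal{C}\to\mathbb{H}_{n,k}\mathcal{C}$ for any structure $\mathcal{C}$; $\mathbb{H}_{n,k}f$ is the map induced by $\mathbb{T}_kf$. *)

theory Defs
  imports Main "HOL-Library.Sublist"
begin

record ('r, 'a) struc =
  univ :: "'a set"
  rels :: "'r \<Rightarrow> 'a list set"

definition sigma_struc :: "('r \<Rightarrow> nat) \<Rightarrow> ('r, 'a) struc \<Rightarrow> bool" where
  "sigma_struc ar A \<longleftrightarrow> (\<forall>R. \<forall>t \<in> rels A R. length t = ar R \<and> set t \<subseteq> univ A)"

definition hom :: "('r, 'a) struc \<Rightarrow> ('r, 'b) struc \<Rightarrow> ('a \<Rightarrow> 'b) \<Rightarrow> bool" where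
  "hom A B f \<longleftrightarrow> f ` univ A \<subseteq> univ B \<and> (\<forall>R. \<forall>t \<in> rels A R. map f t \<in> rels B R)"

definition eps :: "('a \<times> nat) list \<Rightarrow> 'a" where
  "eps s = fst (last s)"

definition Tuniv :: "nat \<Rightarrow> ('r, 'a) struc \<Rightarrow> ('a \<times> nat) list set" where
  "Tuniv k A = {s. s \<noteq> [] \<and> set s \<subseteq> univ A \<times> {1..k}}"

definition Tk :: "nat \<Rightarrow> ('r, 'a) struc \<Rightarrow> ('r, ('a \<times> nat) list) struc" where
  "Tk k A = \<lparr> univ = Tuniv k A,
     rels = (\<lambda>R. {ss. set ss \<subseteq> Tuniv k A
        \<and> (\<forall>i<length ss. \<forall>j<length ss. prefix (ss!i) (ss!j) \<or> prefix (ss!j) (ss!i))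
        \<and> map eps ss \<in> rels A R
        \<and> (\<forall>i<length ss. \<forall>j<length ss. prefix (ss!i) (ss!j) \<longrightarrow>
             (\<forall>u. strict_prefix (ss!i) u \<and> prefix u (ss!j) \<longrightarrow>
                  snd (last u) \<noteq> snd (last (ss!i)))) }) \<rparr>"

definition Tmap :: "('a \<Rightarrow> 'b) \<Rightarrow> ('a \<times> nat) list \<Rightarrow> ('b \<times> nat) list" where
  "Tmap f s = map (\<lambda>(a, p). (f a, p)) s"

definition delta :: "('a \<times> nat) list \<Rightarrow> (('a \<times> nat) list \<times> nat) list" where
  "delta s = map (\<lambda>i. (take (Suc i) s, snd (s ! i))) [0..<length s]"

definition basic :: "nat \<Rightarrow> ('a \<times> nat) list \<Rightarrow> bool" where
  "basic n s \<longleftrightarrow> length s \<le> n \<and> distinct (map snd s)"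

definition longest_basic :: "nat \<Rightarrow> ('a \<times> nat) list \<Rightarrow> nat" where
  "longest_basic n s = Max {m. m \<le> length s \<and> basic n (take m s)}"

function Sn :: "nat \<Rightarrow> ('a \<times> nat) list \<Rightarrow> ('a \<times> nat) list list" where
  "Sn n s = (if basic n s then [s] else
     (if longest_basic n s = 0 then [s]
      else take (longest_basic n s) s # Sn n (drop (longest_basic n s) s)))"
  by pat_completeness auto
termination
  apply (relation "measure (\<lambda>(n, s). length s)")
   apply simp
  apply (clarsimp simp: basic_def)
  apply (case_tac s)
   apply auto
  done

definition alpha :: "nat \<Rightarrow> ('a \<times> nat) list \<Rightarrow> nat \<Rightarrow> ('a \<times> nat) list list" where
  "alpha n s p = (let bs = Sn n s; b = last bs in
     if length b = n \<or> p \<in> snd ` set b then bs else butlast bs)"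

definition approx :: "nat \<Rightarrow> ('a \<times> nat) list \<Rightarrow> ('a \<times> nat) list \<Rightarrow> bool" where
  "approx n u v \<longleftrightarrow> u \<noteq> [] \<and> v \<noteq> [] \<and> fst (last u) = fst (last v) \<and>
     alpha n (butlast u) (snd (last u)) = alpha n (butlast v) (snd (last v))"

definition qmap :: "nat \<Rightarrow> nat \<Rightarrow> ('r, 'a) struc \<Rightarrow> ('a \<times> nat) list \<Rightarrow> ('a \<times> nat) list set" where
  "qmap n k A s = {t \<in> univ (Tk k A). approx n s t}"

definition Hk :: "nat \<Rightarrow> nat \<Rightarrow> ('r, 'a) struc \<Rightarrow> ('r, ('a \<times> nat) list set) struc" where
  "Hk n k A = \<lparr> univ = qmap n k A ` univ (Tk k A),
     rels = (\<lambda>R. map (qmap n k A) ` rels (Tk k A) R) \<rparr>"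

definition Hmap :: "nat \<Rightarrow> nat \<Rightarrow> ('r, 'b) struc \<Rightarrow> ('a \<Rightarrow> 'b) \<Rightarrow> ('a \<times> nat) list set \<Rightarrow> ('b \<times> nat) list set" where
  "Hmap n k B f c = qmap n k B (Tmap f (SOME s. s \<in> c))"

definition epsH :: "('a \<times> nat) list set \<Rightarrow> 'a" where
  "epsH c = eps (SOME s. s \<in> c)"

definition deltaH :: "nat \<Rightarrow> nat \<Rightarrow> ('r, 'a) struc \<Rightarrow> ('a \<times> nat) list set \<Rightarrow> (('a \<times> nat) list set \<times> nat) list set" where
  "deltaH n k A c = qmap n k (Hk n k A) (Tmap (qmap n k A) (delta (SOME s. s \<in> c)))"

end

theory Submission
  imports Defs
begin

text \<open>A homomorphism out of \<open>T\<^sub>k\<A>\<close> that is constant on \<open>\<approx>\<^sub>n\<close>-classes factors through \<open>q\<^sub>n\<close>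
  as a homomorphism out of \<open>H\<^sub>n\<^sub>,\<^sub>k\<A>\<close>; both \<open>\<epsilon>\<close> and \<open>q\<^sub>n \<circ> T\<^sub>kq\<^sub>n \<circ> \<delta>\<close> are such homomorphisms.
  For \<open>\<epsilon>\<close> constancy is immediate, as \<open>\<approx>\<^sub>n\<close> compares last elements. For the second map,
  \<open>\<alpha>\<^sub>n(s, p)\<close> cuts an initial segment of \<open>s\<close> into blocks whose lengths depend only on the
  sequence of pebbles of \<open>s\<close>; since \<open>T\<^sub>kq\<^sub>n \<circ> \<delta>\<close> preserves pebbles and commutes with taking
  prefixes, equal \<open>\<alpha>\<^sub>n\<close>-values of \<open>s\<close> and \<open>t\<close> give equal \<open>\<alpha>\<^sub>n\<close>-values of their images.
  Naturality of both families is then checked on representatives.\<close>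

section \<open>Block decompositions\<close>

fun split_blocks :: "nat list \<Rightarrow> 'a list \<Rightarrow> 'a list list" where
  "split_blocks [] xs = []"
| "split_blocks (l # ls) xs = take l xs # split_blocks ls (drop l xs)"

lemma split_blocks_concat_append: "split_blocks (map length L) (concat L @ R) = L"
  by (induction L) auto

lemma concat_split_blocks: "concat (split_blocks ls xs) = take (sum_list ls) xs"
  by (induction ls arbitrary: xs) (auto simp: take_add)

lemma split_blocks_take: "split_blocks ls (take (sum_list ls) xs) = split_blocks ls xs"
  by (induction ls arbitrary: xs) (auto simp: drop_take)

lemma prefix_conv_take: "prefix a b \<longleftrightarrow> a = take (length a) b"
proof
  assume "prefix a b"
  then show "a = take (length a) b" by (auto simp: prefix_def)
next
  assume "a = take (length a) b"
  then show "prefix a b" by (metis take_is_prefix)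
qed

lemma prefix_if_comparable_length_le:
  "prefix a b \<or> prefix b a \<Longrightarrow> length a \<le> length b \<Longrightarrow> prefix a b"
  by (metis prefix_length_prefix prefix_order.eq_iff)

declare Sn.simps [simp del]

lemma concat_Sn: "concat (Sn n s) = s"
  by (induction n s rule: Sn.induct) (subst Sn.simps, auto)

lemma Sn_pebbles_cong:
  "map snd xs = map snd ys \<Longrightarrow> map (map snd) (Sn n xs) = map (map snd) (Sn n ys)"
proof (induction n xs arbitrary: ys rule: Sn.induct)
  case (1 n s)
  have basic_take: "basic n (take m s) = basic n (take m ys)" for m
    using "1.prems" unfolding basic_def by (metis length_map take_map)
  have len: "length s = length ys"
    using "1.prems" by (metis length_map)
  have basic: "basic n s = basic n ys"
    using basic_take[of "length s"] len by simp
  have longest: "longest_basic n s = longest_basic n ys"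
    unfolding longest_basic_def using basic_take len by simp
  show ?case
  proof (cases "basic n s \<or> longest_basic n s = 0")
    case True
    then show ?thesis
      using basic longest "1.prems" by (subst (1 2) Sn.simps) auto
  next
    case False
    have "map snd (drop (longest_basic n s) s) = map snd (drop (longest_basic n s) ys)"
      using "1.prems" by (metis drop_map)
    then have "map (map snd) (Sn n (drop (longest_basic n s) s))
        = map (map snd) (Sn n (drop (longest_basic n s) ys))"
      using "1.IH" False by blast
    then show ?thesis
      using False basic longest "1.prems" by (subst (1 2) Sn.simps) (auto simp: take_map[symmetric])
  qed
qed

lemma prefix_alpha_Sn: "prefix (alpha n s p) (Sn n s)"
  unfolding alpha_def Let_def by (simp add: prefixeq_butlast)

lemma alpha_pebbles_cong:
  assumes "map snd xs = map snd ys"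
  shows "map length (alpha n xs p) = map length (alpha n ys p)"
proof -
  have Sn: "map (map snd) (Sn n xs) = map (map snd) (Sn n ys)"
    using assms by (rule Sn_pebbles_cong)
  have "Sn n xs \<noteq> []" "Sn n ys \<noteq> []"
    by (subst Sn.simps, simp)+
  then have last: "map snd (last (Sn n xs)) = map snd (last (Sn n ys))"
    using arg_cong[OF Sn, of last] by (simp add: last_map)
  have "length (last (Sn n xs)) = length (last (Sn n ys))"
    using arg_cong[OF last, of length] by simp
  moreover have "p \<in> snd ` set (last (Sn n xs)) \<longleftrightarrow> p \<in> snd ` set (last (Sn n ys))"
    using arg_cong[OF last, of set] by simp
  ultimately have "map (map snd) (alpha n xs p) = map (map snd) (alpha n ys p)"
    unfolding alpha_def Let_def using Sn by (simp add: map_butlast)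
  then have "map length (map (map snd) (alpha n xs p)) = map length (map (map snd) (alpha n ys p))"
    by (rule arg_cong)
  then show ?thesis
    by (simp add: comp_def)
qed

lemma alpha_eq_split_blocks: "alpha n s p = split_blocks (map length (alpha n s p)) s"
proof -
  obtain R where R: "Sn n s = alpha n s p @ R"
    using prefix_alpha_Sn[of n s p] by (auto simp: prefix_def)
  have "split_blocks (map length (alpha n s p)) s
      = split_blocks (map length (alpha n s p)) (concat (Sn n s))"
    by (simp add: concat_Sn)
  also have "\<dots> = split_blocks (map length (alpha n s p)) (concat (alpha n s p) @ concat R)"
    by (simp add: R)
  also have "\<dots> = alpha n s p"
    by (rule split_blocks_concat_append)
  finally show ?thesis ..
qed

lemma alpha_transfer:
  assumes pebbles: "\<And>s. map snd (F s) = map snd s"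
    and take: "\<And>m s. F (take m s) = take m (F s)"
    and eq: "alpha n P p = alpha n Q q"
  shows "alpha n (F P) p = alpha n (F Q) q"
proof -
  define ls where "ls = map length (alpha n P p)"
  have lsQ: "ls = map length (alpha n Q q)"
    using eq by (simp add: ls_def)
  have F_alpha: "alpha n (F s) r = split_blocks ls (F (take (sum_list ls) s))"
    if "ls = map length (alpha n s r)" for s r
  proof -
    have "map length (alpha n (F s) r) = ls"
      using that alpha_pebbles_cong[OF pebbles] by simp
    then show ?thesis
      by (metis alpha_eq_split_blocks split_blocks_take take)
  qed
  have "take (sum_list ls) P = take (sum_list ls) Q"
    by (metis concat_split_blocks alpha_eq_split_blocks ls_def lsQ eq)
  then show ?thesis
    using F_alpha[OF ls_def] F_alpha[OF lsQ] by simp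
qed

section \<open>The maps \<open>T\<^sub>k f\<close> and \<open>\<delta>\<close>\<close>

lemma length_Tmap [simp]: "length (Tmap f s) = length s"
  by (simp add: Tmap_def)

lemma map_snd_Tmap [simp]: "map snd (Tmap f s) = map snd s"
  by (auto simp: Tmap_def)

lemma Tmap_eq_Nil_iff [simp]: "Tmap f s = [] \<longleftrightarrow> s = []"
  by (simp add: Tmap_def)

lemma nth_Tmap: "i < length s \<Longrightarrow> Tmap f s ! i = (f (fst (s ! i)), snd (s ! i))"
  by (simp add: Tmap_def split: prod.splits)

lemma take_Tmap: "take m (Tmap f s) = Tmap f (take m s)"
  by (simp add: Tmap_def take_map)

lemma last_Tmap: "s \<noteq> [] \<Longrightarrow> last (Tmap f s) = (f (fst (last s)), snd (last s))"
  by (simp add: Tmap_def last_map split: prod.splits)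

lemma Tmap_Tmap: "Tmap g (Tmap f s) = Tmap (g \<circ> f) s"
  by (simp add: Tmap_def split: prod.splits)

lemma Tmap_cong: "(\<And>x. x \<in> fst ` set s \<Longrightarrow> f x = g x) \<Longrightarrow> Tmap f s = Tmap g s"
  by (force simp: Tmap_def)

lemma length_delta [simp]: "length (delta s) = length s"
  by (simp add: delta_def)

lemma delta_eq_Nil_iff [simp]: "delta s = [] \<longleftrightarrow> s = []"
  by (simp add: delta_def)

lemma nth_delta: "i < length s \<Longrightarrow> delta s ! i = (take (Suc i) s, snd (s ! i))"
  by (simp add: delta_def)

lemma map_snd_delta [simp]: "map snd (delta s) = map snd s"
  by (rule nth_equalityI) (auto simp: nth_delta)

lemma take_delta: "take m (delta s) = delta (take m s)"
  by (rule nth_equalityI) (auto simp: nth_delta)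

lemma last_delta: "s \<noteq> [] \<Longrightarrow> last (delta s) = (s, snd (last s))"
  by (simp add: last_conv_nth nth_delta)

lemma fst_set_delta: "x \<in> fst ` set (delta s) \<Longrightarrow> \<exists>i<length s. x = take (Suc i) s"
  by (fastforce simp: in_set_conv_nth nth_delta)

lemma delta_Tmap: "delta (Tmap f s) = Tmap (Tmap f) (delta s)"
  by (rule nth_equalityI) (auto simp: nth_delta nth_Tmap take_Tmap)

abbreviation coext :: "(('a \<times> nat) list \<Rightarrow> 'b) \<Rightarrow> ('a \<times> nat) list \<Rightarrow> ('b \<times> nat) list" where
  "coext h s \<equiv> Tmap h (delta s)"

lemma take_coext: "take m (coext h s) = coext h (take m s)"
  by (simp add: take_Tmap take_delta)

lemma butlast_coext: "butlast (coext h s) = coext h (butlast s)"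
  by (simp add: butlast_conv_take take_coext)

lemma last_coext: "s \<noteq> [] \<Longrightarrow> last (coext h s) = (h s, snd (last s))"
  by (simp add: last_Tmap last_delta)

lemma prefix_coext: "prefix a b \<Longrightarrow> prefix (coext h a) (coext h b)"
  by (metis prefix_conv_take take_coext take_is_prefix)

lemma prefix_coextE:
  assumes "prefix u (coext h b)"
  obtains a where "prefix a b" "u = coext h a"
  using assms by (metis prefix_conv_take take_coext take_is_prefix)

lemma prefix_coext_reflect:
  assumes "prefix a b \<or> prefix b a" and "prefix (coext h a) (coext h b)"
  shows "prefix a b"
  using assms prefix_if_comparable_length_le prefix_length_le by fastforce

lemma approx_sym: "approx n s t \<Longrightarrow> approx n t s"
  by (auto simp: approx_def)

lemma approx_trans: "approx n s t \<Longrightarrow> approx n t u \<Longrightarrow> approx n s u"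
  by (auto simp: approx_def)

lemma qmap_eq: "approx n s t \<Longrightarrow> qmap n k A s = qmap n k A t"
  unfolding qmap_def by (blast intro: approx_trans approx_sym)

lemma approx_Tmap: "approx n s t \<Longrightarrow> approx n (Tmap f s) (Tmap f t)"
  using alpha_transfer[of "Tmap f" n "butlast s" "snd (last s)" "butlast t" "snd (last t)"]
  by (auto simp: approx_def last_Tmap take_Tmap butlast_conv_take)

lemma approx_coext:
  assumes "approx n s t" and "h s = h t"
  shows "approx n (coext h s) (coext h t)"
  using assms alpha_transfer[of "coext h" n "butlast s" "snd (last s)" "butlast t" "snd (last t)"]
  by (auto simp: approx_def last_coext butlast_coext take_coext)

section \<open>Homomorphisms between \<open>T\<^sub>k\<close> and \<open>H\<^sub>n\<^sub>,\<^sub>k\<close>\<close>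

lemma hom_univ: "hom A B f \<Longrightarrow> x \<in> univ A \<Longrightarrow> f x \<in> univ B"
  by (auto simp: hom_def)

lemma hom_comp: "hom A B f \<Longrightarrow> hom B C g \<Longrightarrow> hom A C (g \<circ> f)"
  unfolding hom_def by (auto simp: image_subset_iff simp flip: map_map)

lemma univ_Tk: "univ (Tk k A) = Tuniv k A"
  by (simp add: Tk_def)

lemma take_Tuniv: "s \<in> Tuniv k A \<Longrightarrow> 0 < m \<Longrightarrow> take m s \<in> Tuniv k A"
  unfolding Tuniv_def using set_take_subset[of m s] by auto

lemma Tuniv_neq_Nil: "s \<in> Tuniv k A \<Longrightarrow> s \<noteq> []"
  by (simp add: Tuniv_def)

lemma rels_Tk_subset: "ss \<in> rels (Tk k A) R \<Longrightarrow> set ss \<subseteq> univ (Tk k A)"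
  by (simp add: Tk_def)

lemma Tmap_Tuniv: "hom A B f \<Longrightarrow> s \<in> Tuniv k A \<Longrightarrow> Tmap f s \<in> Tuniv k B"
  by (force simp: hom_def Tuniv_def Tmap_def)

lemma hom_eps: "hom (Tk k A) A eps"
  unfolding hom_def
proof (intro conjI allI ballI subsetI)
  fix x assume "x \<in> eps ` univ (Tk k A)"
  then obtain s where "s \<in> Tuniv k A" "x = fst (last s)"
    by (auto simp: Tk_def eps_def)
  then have "last s \<in> univ A \<times> {1..k}"
    using last_in_set Tuniv_neq_Nil by (fastforce simp: Tuniv_def)
  then show "x \<in> univ A"
    using \<open>x = fst (last s)\<close> by auto
qed (simp add: Tk_def)

lemma hom_qmap: "hom (Tk k A) (Hk n k A) (qmap n k A)"
  by (simp add: hom_def Hk_def)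

lemma coext_Tuniv:
  assumes h: "hom (Tk k A) B h" and s: "s \<in> Tuniv k A"
  shows "coext h s \<in> Tuniv k B"
proof -
  have "x \<in> univ B \<times> {1..k}" if "x \<in> set (coext h s)" for x
  proof -
    obtain i where i: "i < length s" "x = (h (take (Suc i) s), snd (s ! i))"
      using \<open>x \<in> set (coext h s)\<close> by (auto simp: in_set_conv_nth nth_Tmap nth_delta)
    have "h (take (Suc i) s) \<in> univ B"
      using h take_Tuniv[OF s] by (auto simp: hom_def Tk_def)
    moreover have "s ! i \<in> univ A \<times> {1..k}"
      using s nth_mem[OF i(1)] by (auto simp: Tuniv_def)
    ultimately show ?thesis
      using i(2) by auto
  qed
  then show ?thesis
    using s by (auto simp: Tuniv_def)
qed

lemma coext_pebble_fresh:
  assumes a: "a \<noteq> []" and comparable: "prefix a b \<or> prefix b a"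
    and fresh: "\<And>u. prefix a b \<Longrightarrow> strict_prefix a u \<Longrightarrow> prefix u b \<Longrightarrow> snd (last u) \<noteq> snd (last a)"
    and prefix: "prefix (coext h a) (coext h b)"
    and u: "strict_prefix (coext h a) u" "prefix u (coext h b)"
  shows "snd (last u) \<noteq> snd (last (coext h a))"
proof -
  obtain u' where u': "prefix u' b" "u = coext h u'"
    using u(2) by (rule prefix_coextE)
  have ab: "prefix a b"
    using comparable prefix by (rule prefix_coext_reflect)
  moreover have "length a < length u'"
    using u(1) u'(2) prefix_length_less by fastforce
  ultimately have "strict_prefix a u'"
    using u'(1) prefix_length_prefix by (fastforce simp: strict_prefix_def)
  then have "snd (last u') \<noteq> snd (last a)"
    using fresh ab u'(1) by blast
  moreover have "u' \<noteq> []"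
    using \<open>length a < length u'\<close> by auto
  ultimately show ?thesis
    using a u'(2) by (simp add: last_coext)
qed

lemma coext_rels_Tk:
  assumes h: "hom (Tk k A) B h" and ss: "ss \<in> rels (Tk k A) R"
  shows "map (coext h) ss \<in> rels (Tk k B) R"
proof -
  have ssU: "set ss \<subseteq> Tuniv k A"
    and comparable: "\<forall>i<length ss. \<forall>j<length ss. prefix (ss!i) (ss!j) \<or> prefix (ss!j) (ss!i)"
    and fresh: "\<forall>i<length ss. \<forall>j<length ss. prefix (ss!i) (ss!j) \<longrightarrow>
           (\<forall>u. strict_prefix (ss!i) u \<and> prefix u (ss!j) \<longrightarrow> snd (last u) \<noteq> snd (last (ss!i)))"
    using ss by (simp_all add: Tk_def)
  have nonempty: "s \<noteq> []" if "s \<in> set ss" for s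
    using ssU that Tuniv_neq_Nil by blast
  have "set (map (coext h) ss) \<subseteq> Tuniv k B"
    using ssU coext_Tuniv[OF h] by auto
  moreover have "\<forall>i<length ss. \<forall>j<length ss.
      prefix (coext h (ss!i)) (coext h (ss!j)) \<or> prefix (coext h (ss!j)) (coext h (ss!i))"
    using comparable prefix_coext by blast
  moreover have "map eps (map (coext h) ss) \<in> rels B R"
  proof -
    have "map eps (map (coext h) ss) = map h ss"
      unfolding map_map by (rule map_cong) (simp_all add: eps_def last_coext nonempty)
    moreover have "map h ss \<in> rels B R"
      using h ss by (simp add: hom_def)
    ultimately show ?thesis
      by (simp only:)
  qed
  moreover have "\<forall>i<length ss. \<forall>j<length ss. prefix (coext h (ss!i)) (coext h (ss!j)) \<longrightarrow>
      (\<forall>u. strict_prefix (coext h (ss!i)) u \<and> prefix u (coext h (ss!j)) \<longrightarrow>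
        snd (last u) \<noteq> snd (last (coext h (ss!i))))"
  proof (intro allI impI)
    fix i j u
    assume ij: "i < length ss" "j < length ss"
      and prefix: "prefix (coext h (ss!i)) (coext h (ss!j))"
      and u: "strict_prefix (coext h (ss!i)) u \<and> prefix u (coext h (ss!j))"
    have "ss ! i \<noteq> []"
      using nonempty ij by simp
    moreover have "prefix (ss!i) (ss!j) \<or> prefix (ss!j) (ss!i)"
      using comparable ij by blast
    moreover have "snd (last v) \<noteq> snd (last (ss!i))"
      if "prefix (ss!i) (ss!j)" "strict_prefix (ss!i) v" "prefix v (ss!j)" for v
      using fresh ij that by blast
    ultimately show "snd (last u) \<noteq> snd (last (coext h (ss!i)))"
      using prefix conjunct1[OF u] conjunct2[OF u] by (rule coext_pebble_fresh)
  qed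
  ultimately show ?thesis
    by (simp add: Tk_def)
qed

lemma hom_coext:
  assumes "hom (Tk k A) B h"
  shows "hom (Tk k A) (Tk k B) (coext h)"
  unfolding hom_def using coext_Tuniv[OF assms] coext_rels_Tk[OF assms] by (auto simp: univ_Tk)

lemma hom_Hk_factor:
  assumes f: "hom (Tk k A) C f" and g: "\<And>s. s \<in> univ (Tk k A) \<Longrightarrow> g (qmap n k A s) = f s"
  shows "hom (Hk n k A) C g"
  unfolding hom_def
proof (intro conjI allI ballI subsetI)
  fix x assume "x \<in> g ` univ (Hk n k A)"
  then obtain s where "s \<in> univ (Tk k A)" "x = f s"
    using g by (auto simp: Hk_def)
  then show "x \<in> univ C"
    using f by (auto simp: hom_def)
next
  fix R t assume "t \<in> rels (Hk n k A) R"
  then obtain ss where ss: "ss \<in> rels (Tk k A) R" "t = map (qmap n k A) ss"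
    by (auto simp: Hk_def)
  have "g (qmap n k A s) = f s" if "s \<in> set ss" for s
    using g rels_Tk_subset[OF ss(1)] that by blast
  then have "map g t = map f ss"
    using ss(2) by simp
  then show "map g t \<in> rels C R"
    using f ss(1) by (simp add: hom_def)
qed

section \<open>Counit and comultiplication of \<open>H\<^sub>n\<^sub>,\<^sub>k\<close>\<close>

lemma some_in_qmap:
  assumes "s \<in> univ (Tk k A)"
  shows "approx n s (SOME t. t \<in> qmap n k A s)"
proof -
  have "s \<in> qmap n k A s"
    using assms by (simp add: qmap_def approx_def univ_Tk Tuniv_def)
  then have "(SOME t. t \<in> qmap n k A s) \<in> qmap n k A s"
    by (rule someI)
  then show ?thesis
    by (simp add: qmap_def)
qed

lemma epsH_qmap: "s \<in> univ (Tk k A) \<Longrightarrow> epsH (qmap n k A s) = eps s"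
  using some_in_qmap[of s k A n] by (simp add: epsH_def eps_def approx_def)

lemma deltaH_qmap:
  "s \<in> univ (Tk k A) \<Longrightarrow> deltaH n k A (qmap n k A s) = qmap n k (Hk n k A) (coext (qmap n k A) s)"
proof -
  assume "s \<in> univ (Tk k A)"
  then have approx: "approx n (SOME t. t \<in> qmap n k A s) s"
    by (rule some_in_qmap[THEN approx_sym])
  then have "approx n (coext (qmap n k A) (SOME t. t \<in> qmap n k A s)) (coext (qmap n k A) s)"
    using qmap_eq[OF approx] by (rule approx_coext)
  then show ?thesis
    unfolding deltaH_def by (rule qmap_eq)
qed

lemma Hmap_qmap: "s \<in> univ (Tk k A) \<Longrightarrow> Hmap n k B f (qmap n k A s) = qmap n k B (Tmap f s)"
  unfolding Hmap_def by (rule qmap_eq, rule approx_Tmap, rule approx_sym, rule some_in_qmap)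

lemma hom_epsH: "hom (Hk n k A) A epsH"
  using hom_eps by (rule hom_Hk_factor) (rule epsH_qmap)

lemma hom_deltaH: "hom (Hk n k A) (Hk n k (Hk n k A)) (deltaH n k A)"
proof (rule hom_Hk_factor)
  show "hom (Tk k A) (Hk n k (Hk n k A)) (qmap n k (Hk n k A) \<circ> coext (qmap n k A))"
    using hom_coext[OF hom_qmap] hom_qmap by (rule hom_comp)
qed (simp add: deltaH_qmap)

lemma epsH_natural:
  assumes "hom A B f" and "c \<in> univ (Hk n k A)"
  shows "f (epsH c) = epsH (Hmap n k B f c)"
proof -
  obtain s where s: "s \<in> Tuniv k A" "c = qmap n k A s"
    using assms(2) by (auto simp: Hk_def univ_Tk)
  then have "epsH (Hmap n k B f c) = eps (Tmap f s)"
    using Tmap_Tuniv[OF assms(1)] by (simp add: Hmap_qmap epsH_qmap univ_Tk)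
  also have "\<dots> = f (eps s)"
    using Tuniv_neq_Nil[OF s(1)] by (simp add: eps_def last_Tmap)
  finally show ?thesis
    using s by (simp add: epsH_qmap univ_Tk)
qed

lemma deltaH_natural:
  assumes "hom A B f" and "c \<in> univ (Hk n k A)"
  shows "deltaH n k B (Hmap n k B f c) = Hmap n k (Hk n k B) (Hmap n k B f) (deltaH n k A c)"
proof -
  obtain s where s: "s \<in> Tuniv k A" "c = qmap n k A s"
    using assms(2) by (auto simp: Hk_def univ_Tk)
  have "deltaH n k B (Hmap n k B f c) = qmap n k (Hk n k B) (coext (qmap n k B) (Tmap f s))"
    using s Tmap_Tuniv[OF assms(1)] by (simp add: Hmap_qmap deltaH_qmap univ_Tk)
  also have "coext (qmap n k B) (Tmap f s) = Tmap (qmap n k B \<circ> Tmap f) (delta s)"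
    by (simp only: delta_Tmap Tmap_Tmap)
  also have "\<dots> = Tmap (Hmap n k B f \<circ> qmap n k A) (delta s)"
  proof (rule Tmap_cong)
    fix x assume "x \<in> fst ` set (delta s)"
    then obtain i where "x = take (Suc i) s"
      using fst_set_delta by blast
    then have "x \<in> univ (Tk k A)"
      using take_Tuniv[OF s(1), of "Suc i"] by (simp add: univ_Tk)
    then show "(qmap n k B \<circ> Tmap f) x = (Hmap n k B f \<circ> qmap n k A) x"
      by (simp add: Hmap_qmap)
  qed
  also have "\<dots> = Tmap (Hmap n k B f) (coext (qmap n k A) s)"
    by (simp only: Tmap_Tmap)
  also have "qmap n k (Hk n k B) \<dots> = Hmap n k (Hk n k B) (Hmap n k B f) (deltaH n k A c)"
    using s hom_univ[OF hom_coext[OF hom_qmap], of s k A n]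
    by (simp add: deltaH_qmap Hmap_qmap univ_Tk)
  finally show ?thesis .
qed

theorem lemma3p11:
  fixes ar :: "'r \<Rightarrow> nat" and n k :: nat
  assumes "1 \<le> n" and "n \<le> k"
  shows
  "(\<forall>A :: ('r, 'a) struc. sigma_struc ar A \<longrightarrow>
        hom (Hk n k A) A epsH
      \<and> (\<forall>s \<in> univ (Tk k A). eps s = epsH (qmap n k A s))
      \<and> (\<forall>e. hom (Hk n k A) A e \<and> (\<forall>s \<in> univ (Tk k A). eps s = e (qmap n k A s))
             \<longrightarrow> (\<forall>c \<in> univ (Hk n k A). e c = epsH c))
      \<and> (\<forall>s \<in> univ (Tk k A). \<forall>t \<in> univ (Tk k A). approx n s t \<longrightarrow>
             qmap n k (Hk n k A) (Tmap (qmap n k A) (delta s))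
           = qmap n k (Hk n k A) (Tmap (qmap n k A) (delta t)))
      \<and> (\<forall>s \<in> univ (Tk k A).
             deltaH n k A (qmap n k A s) = qmap n k (Hk n k A) (Tmap (qmap n k A) (delta s)))
      \<and> hom (Hk n k A) (Hk n k (Hk n k A)) (deltaH n k A))
   \<and> (\<forall>(A :: ('r, 'a) struc) (B :: ('r, 'b) struc) f.
        sigma_struc ar A \<and> sigma_struc ar B \<and> hom A B f \<longrightarrow>
          (\<forall>c \<in> univ (Hk n k A). f (epsH c) = epsH (Hmap n k B f c))
        \<and> (\<forall>c \<in> univ (Hk n k A).
             deltaH n k B (Hmap n k B f c)
           = Hmap n k (Hk n k B) (Hmap n k B f) (deltaH n k A c)))"
proof (intro conjI allI impI ballI)
  fix A :: "('r, 'a) struc"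
  show "hom (Hk n k A) A epsH"
    by (rule hom_epsH)
  show "eps s = epsH (qmap n k A s)" if "s \<in> univ (Tk k A)" for s
    using that by (simp add: epsH_qmap)
  show "e c = epsH c"
    if "hom (Hk n k A) A e \<and> (\<forall>s \<in> univ (Tk k A). eps s = e (qmap n k A s))"
      and "c \<in> univ (Hk n k A)" for e c
    using that by (auto simp: Hk_def epsH_qmap)
  show "qmap n k (Hk n k A) (coext (qmap n k A) s) = qmap n k (Hk n k A) (coext (qmap n k A) t)"
    if "approx n s t" for s t
    using that qmap_eq by (intro qmap_eq approx_coext) blast+
  show "deltaH n k A (qmap n k A s) = qmap n k (Hk n k A) (coext (qmap n k A) s)"
    if "s \<in> univ (Tk k A)" for s
    using that by (rule deltaH_qmap)
  show "hom (Hk n k A) (Hk n k (Hk n k A)) (deltaH n k A)"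
    by (rule hom_deltaH)
next
  fix A :: "('r, 'a) struc" and B :: "('r, 'b) struc" and f
  assume "sigma_struc ar A \<and> sigma_struc ar B \<and> hom A B f"
  then have f: "hom A B f"
    by blast
  show "f (epsH c) = epsH (Hmap n k B f c)" if "c \<in> univ (Hk n k A)" for c
    using f that by (rule epsH_natural)
  show "deltaH n k B (Hmap n k B f c) = Hmap n k (Hk n k B) (Hmap n k B f) (deltaH n k A c)"
    if "c \<in> univ (Hk n k A)" for c
    using f that by (rule deltaH_natural)
qed

end
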